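(* There exists a closed algebra on $\mathbb{N}$ whose clone of term operations is not a Borel subset of $\mathscr{O}$. Moreover, this algebra can be chosen so that all of its fundamental operations are unary.
   Context: Let $\mathbb{N}=\{0,1,2,\dots\}$. For $n\ge 1$ let $\mathscr{O}^{(n)}=\mathbb{N}^{\mathbb{N}^n}$ be the set of all $n$-ary functions on $\mathbb{N}$, and $\mathscr{O}=\bigcup_{n\ge1}\mathscr{O}^{(n)}$. Each $\mathscr{O}^{(n)}$ carries the product topology of the discrete topology on $\mathbb{N}$ (so it is homeomorphic to the Baire space), and $\mathscr{O}$ carries the sum (disjoint union) topology; $\mathscr{O}$ is a Polish space. A clone is a subset of $\mathscr{O}$ containing all projections and closed under composition. An algebra on $\mathbb{N}$ is given by a set $\mathscr{F}\subseteq\mathscr{O}$ of fundamental operations; it is called closed (resp. Borel) if $\mathscr{F}$ is a closed (resp. Borel) subset of $\mathscr{O}$. Its clone of term operations is the smallest clone containing $\mathscr{F}$. *)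

theory Defs
  imports "HOL-Analysis.Analysis"
begin

text \<open>An operation on the natural numbers is represented as a pair (n, f): its arity n \<ge> 1
  and a function f on lists; only the values of f on lists of length n matter, and we
  normalise f to be 0 on lists of any other length, so that O^(n) corresponds bijectively
  to N^(N^n).\<close>

type_synonym op = "nat \<times> (nat list \<Rightarrow> nat)"

definition Ops :: "op set" where
  "Ops = {(n, f). n \<ge> 1 \<and> (\<forall>xs. length xs \<noteq> n \<longrightarrow> f xs = 0)}"

text \<open>Open sets of the sum (over n) of the product topologies of discrete N on N^(N^n):
  a subset U of Ops is open iff around every member (n,f) it contains a basic
  neighbourhood, i.e. all n-ary g agreeing with f on a finite set of n-tuples.\<close>

definition openO :: "op set \<Rightarrow> bool" where
  "openO U \<longleftrightarrow> U \<subseteq> Ops \<and>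
     (\<forall>n f. (n, f) \<in> U \<longrightarrow>
        (\<exists>S. finite S \<and> (\<forall>xs\<in>S. length xs = n) \<and>
             (\<forall>g. (n, g) \<in> Ops \<and> (\<forall>xs\<in>S. g xs = f xs) \<longrightarrow> (n, g) \<in> U)))"

definition closedO :: "op set \<Rightarrow> bool" where
  "closedO F \<longleftrightarrow> F \<subseteq> Ops \<and> openO (Ops - F)"

definition borelO :: "op set \<Rightarrow> bool" where
  "borelO B \<longleftrightarrow> B \<in> sigma_sets Ops {U. openO U}"

definition proj :: "nat \<Rightarrow> nat \<Rightarrow> op" where
  "proj n i = (n, \<lambda>xs. if length xs = n then xs ! i else 0)"

definition comp_op :: "op \<Rightarrow> nat \<Rightarrow> (nat list \<Rightarrow> nat) list \<Rightarrow> op" where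
  "comp_op F m gs = (m, \<lambda>xs. if length xs = m then snd F (map (\<lambda>g. g xs) gs) else 0)"

definition is_clone :: "op set \<Rightarrow> bool" where
  "is_clone C \<longleftrightarrow> C \<subseteq> Ops \<and>
     (\<forall>n i. 1 \<le> n \<and> i < n \<longrightarrow> proj n i \<in> C) \<and>
     (\<forall>n f m gs. (n, f) \<in> C \<and> length gs = n \<and> (\<forall>g\<in>set gs. (m, g) \<in> C)
         \<longrightarrow> comp_op (n, f) m gs \<in> C)"

definition term_clone :: "op set \<Rightarrow> op set" where
  "term_clone F = \<Inter>{C. is_clone C \<and> F \<subseteq> C}"

end

theory Submission
  imports Defs "HOL-Library.Countable"
begin

text \<open>
  Each point x of the Baire space is encoded by the unary operation point_code x, which
  factors as decoder \<circ> pair_code x y for every y. Take as fundamental operations the decoder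
  and the pair_code x y with (x, y) in the closed set diag_pairs. Residues modulo 3 ensure that
  no other composite of generators has the shape of a point code, so point_code x lies in the
  term clone iff x lies in the projection of diag_pairs. The generators form a closed set and
  x \<mapsto> point_code x is continuous, so if the clone were Borel, the complement of that
  projection would be analytic; a diagonal argument over codes of finite prefixes rules
  this out.
\<close>

section \<open>Analytic subsets of the Baire space\<close>

definition agree :: "nat \<Rightarrow> (nat \<Rightarrow> nat) \<Rightarrow> (nat \<Rightarrow> nat) \<Rightarrow> bool" where
  "agree N x x' \<longleftrightarrow> (\<forall>i<N. x i = x' i)"

definition baire_open :: "(nat \<Rightarrow> nat) set \<Rightarrow> bool" where
  "baire_open V \<longleftrightarrow> (\<forall>x\<in>V. \<exists>N. \<forall>x'. agree N x x' \<longrightarrow> x' \<in> V)"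

definition closed_pairs :: "((nat \<Rightarrow> nat) \<times> (nat \<Rightarrow> nat)) set \<Rightarrow> bool" where
  "closed_pairs K \<longleftrightarrow>
     (\<forall>x y. (x, y) \<notin> K \<longrightarrow> (\<exists>N. \<forall>x' y'. agree N x x' \<and> agree N y y' \<longrightarrow> (x', y') \<notin> K))"

definition analytic :: "(nat \<Rightarrow> nat) set \<Rightarrow> bool" where
  "analytic A \<longleftrightarrow> (\<exists>K. closed_pairs K \<and> A = Domain K)"

lemma agree_mono: "agree N x x' \<Longrightarrow> M \<le> N \<Longrightarrow> agree M x x'"
  unfolding agree_def by auto

lemma analytic_compl_open:
  assumes "baire_open V"
  shows "analytic (- V)"
  unfolding analytic_def
proof (intro exI conjI)
  show "closed_pairs {(x, y). x \<notin> V}"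
    using assms unfolding closed_pairs_def baire_open_def by fastforce
qed auto

lemma analytic_open:
  assumes "baire_open V"
  shows "analytic V"
  unfolding analytic_def
proof (intro exI conjI)
  \<comment> \<open>the witness y 0 is a radius of a neighbourhood of x inside V\<close>
  let ?K = "{(x, y :: nat \<Rightarrow> nat). \<forall>x'. agree (y 0) x x' \<longrightarrow> x' \<in> V}"
  show "closed_pairs ?K"
    unfolding closed_pairs_def
  proof (intro allI impI)
    fix x y
    assume "(x, y) \<notin> ?K"
    then obtain x' where x': "agree (y 0) x x'" "x' \<notin> V"
      by auto
    have "(x'', y'') \<notin> ?K" if "agree (Suc (y 0)) x x''" "agree (Suc (y 0)) y y''" for x'' y''
    proof -
      have "y'' 0 = y 0" "agree (y 0) x'' x'"
        using that x'(1) by (auto simp: agree_def)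
      then show ?thesis
        using x'(2) by auto
    qed
    then show "\<exists>N. \<forall>x'' y''. agree N x x'' \<and> agree N y y'' \<longrightarrow> (x'', y'') \<notin> ?K"
      by blast
  qed
  show "V = Domain ?K"
  proof
    show "V \<subseteq> Domain ?K"
    proof
      fix x
      assume "x \<in> V"
      then obtain N where "\<forall>x'. agree N x x' \<longrightarrow> x' \<in> V"
        using assms baire_open_def by auto
      then have "(x, \<lambda>_. N) \<in> ?K"
        by simp
      then show "x \<in> Domain ?K"
        by (rule DomainI)
    qed
    show "Domain ?K \<subseteq> V"
      by (auto simp: agree_def)
  qed
qed

lemma analytic_Union:
  assumes "\<And>i::nat. analytic (A i)"
  shows "analytic (\<Union>i. A i)"
proof -
  from assms obtain K where K: "\<And>i. closed_pairs (K i)" "\<And>i. A i = Domain (K i)"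
    unfolding analytic_def by metis
  \<comment> \<open>the head of the witness selects the set of the union\<close>
  let ?K = "{(x, y). (x, \<lambda>n. y (Suc n)) \<in> K (y 0)}"
  have "closed_pairs ?K"
    unfolding closed_pairs_def
  proof (intro allI impI)
    fix x y
    assume "(x, y) \<notin> ?K"
    then obtain N where N:
      "\<forall>x' y'. agree N x x' \<and> agree N (\<lambda>n. y (Suc n)) y' \<longrightarrow> (x', y') \<notin> K (y 0)"
      using K(1) unfolding closed_pairs_def by fastforce
    have "(x', y') \<notin> ?K" if "agree (Suc N) x x'" "agree (Suc N) y y'" for x' y'
    proof -
      have "y' 0 = y 0" "agree N x x'" "agree N (\<lambda>n. y (Suc n)) (\<lambda>n. y' (Suc n))"
        using that by (auto simp: agree_def)
      then show ?thesis
        using N by auto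
    qed
    then show "\<exists>N. \<forall>x' y'. agree N x x' \<and> agree N y y' \<longrightarrow> (x', y') \<notin> ?K"
      by blast
  qed
  moreover have "(\<Union>i. A i) = Domain ?K"
  proof
    show "(\<Union>i. A i) \<subseteq> Domain ?K"
    proof
      fix x
      assume "x \<in> (\<Union>i. A i)"
      then obtain i y where "(x, y) \<in> K i"
        using K(2) by auto
      then have "(x, case_nat i y) \<in> ?K"
        by simp
      then show "x \<in> Domain ?K"
        by blast
    qed
    show "Domain ?K \<subseteq> (\<Union>i. A i)"
      using K(2) by auto
  qed
  ultimately show ?thesis
    unfolding analytic_def by blast
qed

lemma analytic_Inter:
  assumes "\<And>i::nat. analytic (A i)"
  shows "analytic (\<Inter>i. A i)"
proof -
  from assms obtain K where K: "\<And>i. closed_pairs (K i)" "\<And>i. A i = Domain (K i)"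
    unfolding analytic_def by metis
  \<comment> \<open>the witness interleaves witnesses for all the sets of the intersection\<close>
  let ?K = "{(x, y). \<forall>k. (x, \<lambda>i. y (prod_encode (k, i))) \<in> K k}"
  have "closed_pairs ?K"
    unfolding closed_pairs_def
  proof (intro allI impI)
    fix x y
    assume "(x, y) \<notin> ?K"
    then obtain k where "(x, \<lambda>i. y (prod_encode (k, i))) \<notin> K k"
      by auto
    then obtain N where N:
      "\<forall>x' y'. agree N x x' \<and> agree N (\<lambda>i. y (prod_encode (k, i))) y' \<longrightarrow> (x', y') \<notin> K k"
      using K(1) unfolding closed_pairs_def by blast
    obtain B where B: "(\<lambda>i. prod_encode (k, i)) ` {..<N} \<subseteq> {..<B}"
      using finite_nat_iff_bounded by blast
    have "(x', y') \<notin> ?K" if "agree (max N B) x x'" "agree (max N B) y y'" for x' y'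
    proof -
      have "agree N x x'"
        using that(1) by (rule agree_mono) simp
      moreover have "agree N (\<lambda>i. y (prod_encode (k, i))) (\<lambda>i. y' (prod_encode (k, i)))"
        using that(2) B unfolding agree_def by fastforce
      ultimately show ?thesis
        using N by auto
    qed
    then show "\<exists>N. \<forall>x' y'. agree N x x' \<and> agree N y y' \<longrightarrow> (x', y') \<notin> ?K"
      by blast
  qed
  moreover have "(\<Inter>i. A i) = Domain ?K"
  proof
    show "(\<Inter>i. A i) \<subseteq> Domain ?K"
    proof
      fix x
      assume "x \<in> (\<Inter>i. A i)"
      then have "\<forall>k. \<exists>y. (x, y) \<in> K k"
        using K(2) by auto
      then obtain y where y: "\<And>k. (x, y k) \<in> K k"
        by metis
      then have "(x, \<lambda>j. case prod_decode j of (k, i) \<Rightarrow> y k i) \<in> ?K"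
        by simp
      then show "x \<in> Domain ?K"
        by (rule DomainI)
    qed
    show "Domain ?K \<subseteq> (\<Inter>i. A i)"
      using K(2) by auto
  qed
  ultimately show ?thesis
    unfolding analytic_def by blast
qed

lemma analytic_vimage_borel:
  assumes e_Ops: "\<And>x. e x \<in> Ops"
    and e_cont: "\<And>U. openO U \<Longrightarrow> baire_open (e -` U)"
    and "B \<in> sigma_sets Ops {U. openO U}"
  shows "analytic (e -` B) \<and> analytic (- e -` B)"
  using assms(3)
proof (induction rule: sigma_sets.induct)
  case (Basic U)
  then show ?case
    using analytic_open analytic_compl_open e_cont by simp
next
  case Empty
  have "baire_open {}" "baire_open UNIV"
    unfolding baire_open_def by auto
  then show ?case
    using analytic_open by simp
next
  case (Compl U)
  have "e -` (Ops - U) = - e -` U"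
    using e_Ops by auto
  then show ?case
    using Compl.IH by simp
next
  case (Union U)
  have "e -` \<Union> (range U) = (\<Union>i. e -` U i)" "- e -` \<Union> (range U) = (\<Inter>i. - e -` U i)"
    by auto
  then show ?case
    using analytic_Union analytic_Inter Union.IH by metis
qed

section \<open>A coanalytic set that is not analytic\<close>

definition init :: "(nat \<Rightarrow> nat) \<Rightarrow> nat \<Rightarrow> nat list" where
  "init x n = map x [0..<n]"

lemma init_eq_iff_agree: "init x n = init x' n \<longleftrightarrow> agree n x x'"
  unfolding init_def agree_def by auto

definition prefixes :: "((nat \<Rightarrow> nat) \<times> (nat \<Rightarrow> nat)) set \<Rightarrow> (nat list \<times> nat list) set" where
  "prefixes K = {(init x n, init y n) | x y n. (x, y) \<in> K}"

lemma closed_pairs_mem_iff_prefixes: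
  assumes "closed_pairs K"
  shows "(x, y) \<in> K \<longleftrightarrow> (\<forall>n. (init x n, init y n) \<in> prefixes K)"
proof
  assume "(x, y) \<in> K"
  then show "\<forall>n. (init x n, init y n) \<in> prefixes K"
    unfolding prefixes_def by blast
next
  assume pre: "\<forall>n. (init x n, init y n) \<in> prefixes K"
  show "(x, y) \<in> K"
  proof (rule ccontr)
    assume "(x, y) \<notin> K"
    then obtain N where N: "\<forall>x' y'. agree N x x' \<and> agree N y y' \<longrightarrow> (x', y') \<notin> K"
      using assms unfolding closed_pairs_def by blast
    have "(init x N, init y N) \<in> prefixes K"
      using pre by blast
    then obtain x' y' n where "(x', y') \<in> K" "init x' n = init x N" "init y' n = init y N"
      unfolding prefixes_def by fastforce
    moreover from this have "n = N"
      by (metis init_def length_map length_upt minus_nat.diff_0)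
    ultimately show False
      using N init_eq_iff_agree by metis
  qed
qed

definition diag_pairs :: "((nat \<Rightarrow> nat) \<times> (nat \<Rightarrow> nat)) set" where
  "diag_pairs = {(x, y). \<forall>n. x (to_nat (init x n, init y n)) = 0}"

text \<open>If \<open>- Domain diag_pairs = Domain K\<close>, the point x with x k = 0 exactly when
  from_nat k is a prefix of K belongs to one side iff it belongs to the other.\<close>

lemma not_analytic_compl_diag_pairs: "\<not> analytic (- Domain diag_pairs)"
proof
  assume "analytic (- Domain diag_pairs)"
  then obtain K where K: "closed_pairs K" "- Domain diag_pairs = Domain K"
    unfolding analytic_def by blast
  define x :: "nat \<Rightarrow> nat" where "x k = (if from_nat k \<in> prefixes K then 0 else 1)" for k
  have "x \<in> Domain diag_pairs \<longleftrightarrow> (\<exists>y. \<forall>n. (init x n, init y n) \<in> prefixes K)"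
    unfolding diag_pairs_def x_def by auto
  also have "\<dots> \<longleftrightarrow> x \<in> Domain K"
    using closed_pairs_mem_iff_prefixes[OF K(1)] by auto
  also have "\<dots> \<longleftrightarrow> x \<in> - Domain diag_pairs"
    using K(2) by simp
  finally show False
    by auto
qed

section \<open>Clones of unary operations\<close>

definition unary_op :: "(nat \<Rightarrow> nat) \<Rightarrow> op" where
  "unary_op u = (1, \<lambda>xs. if length xs = 1 then u (xs ! 0) else 0)"

lemma unary_op_Ops: "unary_op u \<in> Ops"
  unfolding unary_op_def Ops_def by auto

lemma unary_op_inj:
  assumes "unary_op u = unary_op v"
  shows "u = v"
proof
  fix k
  show "u k = v k"
    using arg_cong[OF assms, of "\<lambda>p. snd p [k]"] by (simp add: unary_op_def)
qed

lemma Ops_unary_op: "(1, f) \<in> Ops \<Longrightarrow> (1, f) = unary_op (\<lambda>k. f [k])"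
  unfolding Ops_def unary_op_def by (auto intro!: ext simp: length_Suc_conv)

lemma term_clone_comp_unary_op:
  assumes "unary_op f \<in> term_clone F" "unary_op g \<in> term_clone F"
  shows "unary_op (f \<circ> g) \<in> term_clone F"
proof -
  have "comp_op (unary_op f) 1 [snd (unary_op g)] = unary_op (f \<circ> g)"
    unfolding comp_op_def unary_op_def by (auto intro!: ext)
  moreover have "comp_op (unary_op f) 1 [snd (unary_op g)] \<in> C" if "is_clone C" "F \<subseteq> C" for C
  proof -
    have "(1, snd (unary_op f)) \<in> C" "(1, snd (unary_op g)) \<in> C"
      using that assms unfolding term_clone_def unary_op_def by auto
    moreover have "\<And>h m gs. (length gs, h) \<in> C \<Longrightarrow> \<forall>g'\<in>set gs. (m, g') \<in> C
        \<Longrightarrow> comp_op (length gs, h) m gs \<in> C"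
      using \<open>is_clone C\<close> unfolding is_clone_def by blast
    ultimately have "comp_op (1, snd (unary_op f)) 1 [snd (unary_op g)] \<in> C"
      by (metis One_nat_def empty_iff length_Cons list.size(3) set_ConsD list.set(1))
    then show ?thesis
      by (simp add: unary_op_def)
  qed
  ultimately show ?thesis
    unfolding term_clone_def by auto
qed

inductive_set monoid_gen :: "('a \<Rightarrow> 'a) set \<Rightarrow> ('a \<Rightarrow> 'a) set" for G where
  monoid_gen_id: "id \<in> monoid_gen G"
| monoid_gen_step: "f \<in> G \<Longrightarrow> w \<in> monoid_gen G \<Longrightarrow> f \<circ> w \<in> monoid_gen G"

lemma monoid_gen_comp: "v \<in> monoid_gen G \<Longrightarrow> w \<in> monoid_gen G \<Longrightarrow> v \<circ> w \<in> monoid_gen G"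
  by (induction rule: monoid_gen.induct) (auto simp: comp_assoc intro: monoid_gen.intros)

definition unary_clone :: "(nat \<Rightarrow> nat) set \<Rightarrow> op set" where
  "unary_clone M = {(n, h). 1 \<le> n \<and>
     (\<exists>i<n. \<exists>w\<in>M. h = (\<lambda>xs. if length xs = n then w (xs ! i) else 0))}"

lemma unary_op_mem_unary_clone_iff: "unary_op u \<in> unary_clone M \<longleftrightarrow> u \<in> M"
proof
  assume "unary_op u \<in> unary_clone M"
  then obtain w where w: "w \<in> M" "snd (unary_op u) = (\<lambda>xs. if length xs = 1 then w (xs ! 0) else 0)"
    unfolding unary_clone_def unary_op_def by auto
  have "u = w"
  proof
    fix k
    show "u k = w k"
      using fun_cong[OF w(2), of "[k]"] by (simp add: unary_op_def)
  qed
  then show "u \<in> M"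
    using w(1) by simp
qed (auto simp: unary_clone_def unary_op_def)

lemma is_clone_unary_clone:
  assumes "id \<in> M" and comp: "\<And>v w. v \<in> M \<Longrightarrow> w \<in> M \<Longrightarrow> v \<circ> w \<in> M"
  shows "is_clone (unary_clone M)"
  unfolding is_clone_def
proof (intro conjI allI impI)
  show "unary_clone M \<subseteq> Ops"
    unfolding unary_clone_def Ops_def by auto
next
  fix n i :: nat
  assume "1 \<le> n \<and> i < n"
  then show "proj n i \<in> unary_clone M"
    unfolding proj_def unary_clone_def using assms(1) by (auto intro!: exI[of _ i] bexI[of _ id])
next
  fix n f m gs
  assume a: "(n, f) \<in> unary_clone M \<and> length gs = n \<and> (\<forall>g\<in>set gs. (m, g) \<in> unary_clone M)"
  then obtain i w where i: "i < n" "w \<in> M" "f = (\<lambda>xs. if length xs = n then w (xs ! i) else 0)"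
    unfolding unary_clone_def by auto
  have "(m, gs ! i) \<in> unary_clone M"
    using a i by auto
  then obtain j v where j: "1 \<le> m" "j < m" "v \<in> M"
      "gs ! i = (\<lambda>xs. if length xs = m then v (xs ! j) else 0)"
    unfolding unary_clone_def by auto
  \<comment> \<open>only the i-th inner operation matters, and it depends only on its j-th argument\<close>
  have "comp_op (n, f) m gs = (m, \<lambda>xs. if length xs = m then (w \<circ> v) (xs ! j) else 0)"
    unfolding comp_op_def using a i j by (auto intro!: ext)
  then show "comp_op (n, f) m gs \<in> unary_clone M"
    unfolding unary_clone_def using j i(2) comp by auto
qed

lemma term_clone_subset_unary_clone: "term_clone (unary_op ` G) \<subseteq> unary_clone (monoid_gen G)"
proof -
  have "is_clone (unary_clone (monoid_gen G))"
    by (rule is_clone_unary_clone) (auto intro: monoid_gen_id monoid_gen_comp)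
  moreover have "unary_op ` G \<subseteq> unary_clone (monoid_gen G)"
    using monoid_gen_step[OF _ monoid_gen_id] unary_op_mem_unary_clone_iff by fastforce
  ultimately show ?thesis
    unfolding term_clone_def by blast
qed

definition pair_code :: "(nat \<Rightarrow> nat) \<Rightarrow> (nat \<Rightarrow> nat) \<Rightarrow> nat \<Rightarrow> nat" where
  "pair_code x y n =
     (if n mod 3 = 0 \<and> 0 < n then 3 * prod_encode (x (n div 3 - 1), y (n div 3 - 1)) + 1 else 0)"

definition decoder :: "nat \<Rightarrow> nat" where
  "decoder n = (if n mod 3 = 1 then 3 * fst (prod_decode (n div 3)) + 2 else 0)"

definition point_code :: "(nat \<Rightarrow> nat) \<Rightarrow> nat \<Rightarrow> nat" where
  "point_code x n = (if n mod 3 = 0 \<and> 0 < n then 3 * x (n div 3 - 1) + 2 else 0)"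

definition generators :: "(nat \<Rightarrow> nat) set" where
  "generators = insert decoder {pair_code x y | x y. (x, y) \<in> diag_pairs}"

lemma pair_code_mult3: "pair_code x y (3 * k + 3) = 3 * prod_encode (x k, y k) + 1"
  by (simp add: pair_code_def)

lemma point_code_mult3: "point_code x (3 * k + 3) = 3 * x k + 2"
  by (simp add: point_code_def)

lemma point_code_eq_decoder_comp: "point_code x = decoder \<circ> pair_code x y"
  by (rule ext) (simp add: point_code_def decoder_def pair_code_def mod_Suc div_Suc)

lemma point_code_inj: "point_code x = point_code x' \<Longrightarrow> x = x'"
  by (rule ext) (metis point_code_mult3 add_right_cancel mult_left_cancel zero_neq_numeral)

lemma generator_vanishes: "f \<in> generators \<Longrightarrow> n mod 3 = 2 \<or> n = 0 \<Longrightarrow> f n = 0"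
  by (auto simp: generators_def pair_code_def decoder_def)

text \<open>At 3 the four kinds of elements take the value 3, 0, a value \<equiv> 1 and a value \<equiv> 2
  (mod 3); every generator kills 0 and values \<equiv> 2, and only the decoder keeps values \<equiv> 1.\<close>

lemma monoid_gen_generators_cases:
  assumes "w \<in> monoid_gen generators"
  shows "w = id \<or> w 3 = 0 \<or> (\<exists>x y. (x, y) \<in> diag_pairs \<and> w = pair_code x y)
    \<or> (\<exists>x y. (x, y) \<in> diag_pairs \<and> w = decoder \<circ> pair_code x y)"
  using assms
proof (induction rule: monoid_gen.induct)
  case (monoid_gen_step f w)
  from monoid_gen_step.IH show ?case
  proof (elim disjE exE conjE)
    assume "w = id"
    then show ?thesis
      using monoid_gen_step.hyps(1) by (auto simp: generators_def decoder_def)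
  next
    assume "w 3 = 0"
    then show ?thesis
      using generator_vanishes[OF monoid_gen_step.hyps(1)] by simp
  next
    fix x y
    assume xy: "(x, y) \<in> diag_pairs" "w = pair_code x y"
    then have "w 3 = 3 * prod_encode (x 0, y 0) + 1"
      using pair_code_mult3[of x y 0] by simp
    then have "f = decoder \<or> f (w 3) = 0"
      using monoid_gen_step.hyps(1) by (auto simp: generators_def pair_code_def)
    then show ?thesis
      using xy by auto
  next
    fix x y
    assume "w = decoder \<circ> pair_code x y"
    then have "w 3 = 3 * x 0 + 2"
      using point_code_mult3[of x 0] point_code_eq_decoder_comp[of x y] by simp
    moreover have "(3 * x 0 + 2) mod 3 = 2"
      by presburger
    ultimately have "(f \<circ> w) 3 = 0"
      using generator_vanishes[OF monoid_gen_step.hyps(1)] by simp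
    then show ?thesis
      by blast
  qed
qed simp

lemma point_code_mem_term_clone_iff:
  "unary_op (point_code x) \<in> term_clone (unary_op ` generators) \<longleftrightarrow> x \<in> Domain diag_pairs"
proof
  assume "x \<in> Domain diag_pairs"
  then obtain y where "(x, y) \<in> diag_pairs"
    by blast
  then have "unary_op decoder \<in> term_clone (unary_op ` generators)"
      "unary_op (pair_code x y) \<in> term_clone (unary_op ` generators)"
    unfolding term_clone_def generators_def by auto
  then show "unary_op (point_code x) \<in> term_clone (unary_op ` generators)"
    using term_clone_comp_unary_op point_code_eq_decoder_comp by metis
next
  assume "unary_op (point_code x) \<in> term_clone (unary_op ` generators)"
  then have w: "point_code x \<in> monoid_gen generators"
    using term_clone_subset_unary_clone unary_op_mem_unary_clone_iff by blast
  have x3: "point_code x 3 = 3 * x 0 + 2"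
    using point_code_mult3[of x 0] by simp
  from monoid_gen_generators_cases[OF w] show "x \<in> Domain diag_pairs"
  proof (elim disjE exE conjE)
    assume "point_code x = id"
    then have "3 * x 0 + 2 = 3"
      using x3 by simp
    then have False
      by presburger
    then show ?thesis ..
  next
    assume "point_code x 3 = 0"
    then show ?thesis
      using x3 by simp
  next
    fix x' y'
    assume "point_code x = pair_code x' y'"
    then have "3 * x 0 + 2 = 3 * prod_encode (x' 0, y' 0) + 1"
      using x3 pair_code_mult3[of x' y' 0] by simp
    then have False
      by presburger
    then show ?thesis ..
  next
    fix x' y'
    assume "(x', y') \<in> diag_pairs" "point_code x = decoder \<circ> pair_code x' y'"
    moreover from this have "x = x'"
      using point_code_eq_decoder_comp point_code_inj by metis
    ultimately show ?thesis
      by blast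
  qed
qed

lemma closedO_unary_op_image:
  assumes "baire_open (- U)"
  shows "closedO (unary_op ` U)"
  unfolding closedO_def openO_def
proof (intro conjI allI impI)
  show "unary_op ` U \<subseteq> Ops" "Ops - unary_op ` U \<subseteq> Ops"
    using unary_op_Ops by auto
next
  fix n f
  assume nf: "(n, f) \<in> Ops - unary_op ` U"
  show "\<exists>S. finite S \<and> (\<forall>xs\<in>S. length xs = n) \<and>
      (\<forall>g. (n, g) \<in> Ops \<and> (\<forall>xs\<in>S. g xs = f xs) \<longrightarrow> (n, g) \<in> Ops - unary_op ` U)"
  proof (cases "n = 1")
    case False
    then show ?thesis
      by (intro exI[of _ "{}"]) (auto simp: unary_op_def)
  next
    case True
    define u where "u = (\<lambda>k. f [k])"
    have "(1, f) = unary_op u"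
      using nf True Ops_unary_op unfolding u_def by simp
    then have "u \<in> - U"
      using nf True by auto
    then obtain N where N: "\<forall>v. agree N u v \<longrightarrow> v \<in> - U"
      using assms unfolding baire_open_def by blast
    show ?thesis
    proof (intro exI conjI allI impI)
      show "finite ((\<lambda>k. [k]) ` {..<N})" "\<forall>xs\<in>(\<lambda>k. [k]) ` {..<N}. length xs = n"
        using True by auto
      fix g
      assume g: "(n, g) \<in> Ops \<and> (\<forall>xs\<in>(\<lambda>k. [k]) ` {..<N}. g xs = f xs)"
      then have "agree N u (\<lambda>k. g [k])"
        unfolding agree_def u_def by auto
      then have "(\<lambda>k. g [k]) \<notin> U"
        using N by blast
      moreover have "(n, g) = unary_op (\<lambda>k. g [k])"
        using g True Ops_unary_op by simp
      ultimately show "(n, g) \<in> Ops - unary_op ` U"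
        using g unary_op_inj by (metis DiffI image_iff)
    qed
  qed
qed

lemma baire_open_vimage_unary_op:
  assumes nonexpansive: "\<And>N x x'. agree N x x' \<Longrightarrow> agree N (\<phi> x) (\<phi> x')"
    and "openO U"
  shows "baire_open ((unary_op \<circ> \<phi>) -` U)"
  unfolding baire_open_def
proof
  fix x
  assume "x \<in> (unary_op \<circ> \<phi>) -` U"
  then have "(1, snd (unary_op (\<phi> x))) \<in> U"
    by (simp add: unary_op_def)
  then obtain S where S: "finite S" "\<forall>xs\<in>S. length xs = 1"
      "\<forall>g. (1, g) \<in> Ops \<and> (\<forall>xs\<in>S. g xs = snd (unary_op (\<phi> x)) xs) \<longrightarrow> (1, g) \<in> U"
    using \<open>openO U\<close> unfolding openO_def by blast
  obtain N where N: "(\<lambda>xs. xs ! 0) ` S \<subseteq> {..<N}"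
    using finite_nat_iff_bounded S(1) by blast
  have "x' \<in> (unary_op \<circ> \<phi>) -` U" if "agree N x x'" for x'
  proof -
    have "agree N (\<phi> x) (\<phi> x')"
      using nonexpansive that .
    have "snd (unary_op (\<phi> x')) xs = snd (unary_op (\<phi> x)) xs" if "xs \<in> S" for xs
    proof -
      have "xs ! 0 < N"
        using N that by auto
      then show ?thesis
        using \<open>agree N (\<phi> x) (\<phi> x')\<close> by (simp add: agree_def unary_op_def)
    qed
    moreover have "(1, snd (unary_op (\<phi> x'))) \<in> Ops"
      using unary_op_Ops[of "\<phi> x'"] by (simp add: unary_op_def)
    ultimately have "(1, snd (unary_op (\<phi> x'))) \<in> U"
      using S(3) by blast
    then show ?thesis
      by (simp add: unary_op_def)
  qed
  then show "\<exists>N. \<forall>x'. agree N x x' \<longrightarrow> x' \<in> (unary_op \<circ> \<phi>) -` U"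
    by blast
qed

lemma agree_point_code:
  assumes "agree N x x'"
  shows "agree N (point_code x) (point_code x')"
  unfolding agree_def
proof (intro allI impI)
  fix i
  assume "i < N"
  then have "i div 3 - 1 < N"
    by linarith
  then show "point_code x i = point_code x' i"
    using assms unfolding agree_def point_code_def by simp
qed

lemma agree_pair_code_iff:
  "agree (3 * N + 1) (pair_code x y) (pair_code x' y') \<longleftrightarrow> agree N x x' \<and> agree N y y'"
proof
  assume a: "agree (3 * N + 1) (pair_code x y) (pair_code x' y')"
  have "x k = x' k \<and> y k = y' k" if "k < N" for k
    using a[unfolded agree_def, rule_format, of "3 * k + 3"] that
    by (simp add: pair_code_mult3 prod_encode_eq)
  then show "agree N x x' \<and> agree N y y'"
    unfolding agree_def by blast
next
  assume xy: "agree N x x' \<and> agree N y y'"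
  have "pair_code x y i = pair_code x' y' i" if "i < 3 * N + 1" for i
  proof (cases "i mod 3 = 0 \<and> 0 < i")
    case True
    then have "i div 3 - 1 < N"
      using that by (auto elim!: dvdE simp flip: dvd_eq_mod_eq_0)
    then show ?thesis
      using xy unfolding pair_code_def agree_def by simp
  qed (auto simp: pair_code_def)
  then show "agree (3 * N + 1) (pair_code x y) (pair_code x' y')"
    unfolding agree_def by blast
qed

lemma pair_code_range_iff:
  "u \<in> range (case_prod pair_code) \<longleftrightarrow>
     (\<forall>n. u n = (if n mod 3 = 0 \<and> 0 < n then 3 * (u n div 3) + 1 else 0))"
proof
  assume u: "\<forall>n. u n = (if n mod 3 = 0 \<and> 0 < n then 3 * (u n div 3) + 1 else 0)"
  define x where "x k = fst (prod_decode (u (3 * k + 3) div 3))" for k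
  define y where "y k = snd (prod_decode (u (3 * k + 3) div 3))" for k
  have "u n = pair_code x y n" for n
  proof (cases "n mod 3 = 0 \<and> 0 < n")
    case True
    then have "3 * (n div 3 - 1) + 3 = n"
      by presburger
    moreover have "3 * (u n div 3) + 1 = u n"
      using u[rule_format, of n] by (subst (asm) if_P[OF True]) simp
    ultimately show ?thesis
      using True by (simp add: pair_code_def x_def y_def)
  next
    case False
    then have "u n = 0"
      using u[rule_format, of n] by (subst (asm) if_not_P[OF False])
    then show ?thesis
      using False by (simp add: pair_code_def)
  qed
  then have "u = case_prod pair_code (x, y)"
    by (simp add: fun_eq_iff)
  then show "u \<in> range (case_prod pair_code)"
    by (metis rangeI)
qed (auto simp: pair_code_def)

lemma baire_open_compl_range_pair_code: "baire_open (- range (case_prod pair_code))"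
  unfolding baire_open_def
proof
  fix u
  assume "u \<in> - range (case_prod pair_code)"
  then obtain q where q: "u q \<noteq> (if q mod 3 = 0 \<and> 0 < q then 3 * (u q div 3) + 1 else 0)"
    using pair_code_range_iff by blast
  have "v \<notin> range (case_prod pair_code)" if "agree (Suc q) u v" for v
  proof
    assume "v \<in> range (case_prod pair_code)"
    then have "v q = (if q mod 3 = 0 \<and> 0 < q then 3 * (v q div 3) + 1 else 0)"
      using pair_code_range_iff by blast
    moreover have "v q = u q"
      using that by (simp add: agree_def)
    ultimately show False
      using q by argo
  qed
  then show "\<exists>N. \<forall>v. agree N u v \<longrightarrow> v \<in> - range (case_prod pair_code)"
    by blast
qed

lemma baire_open_compl_codes: "baire_open (- {pair_code x y | x y. (x, y) \<in> diag_pairs})"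
  unfolding baire_open_def
proof
  fix u
  assume u: "u \<in> - {pair_code x y | x y. (x, y) \<in> diag_pairs}"
  show "\<exists>N. \<forall>v. agree N u v \<longrightarrow> v \<in> - {pair_code x y | x y. (x, y) \<in> diag_pairs}"
  proof (cases "u \<in> range (case_prod pair_code)")
    case False
    then show ?thesis
      using baire_open_compl_range_pair_code unfolding baire_open_def by fastforce
  next
    case True
    then obtain x y where xy: "u = pair_code x y" "(x, y) \<notin> diag_pairs"
      using u by auto
    then obtain n where n: "x (to_nat (init x n, init y n)) \<noteq> 0"
      unfolding diag_pairs_def by auto
    define j where "j = to_nat (init x n, init y n)"
    define M where "M = n + j + 1"
    \<comment> \<open>every code near u violates the same condition of diag_pairs\<close>
    have "(x', y') \<notin> diag_pairs" if "agree (3 * M + 1) u (pair_code x' y')" for x' y'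
    proof -
      have x': "agree M x x'" and y': "agree M y y'"
        using that xy(1) agree_pair_code_iff[of M x y x' y'] by auto
      have "init x n = init x' n" "init y n = init y' n"
        using agree_mono[OF x'] agree_mono[OF y'] init_eq_iff_agree by (simp_all add: M_def)
      moreover have "x' j = x j"
        using x' unfolding agree_def M_def by simp
      ultimately have "x' (to_nat (init x' n, init y' n)) \<noteq> 0"
        using n by (simp add: j_def)
      then show ?thesis
        unfolding diag_pairs_def by auto
    qed
    then show ?thesis
      by blast
  qed
qed

lemma baire_open_compl_insert:
  assumes "baire_open (- A)"
  shows "baire_open (- insert a A)"
  unfolding baire_open_def
proof
  fix u
  assume "u \<in> - insert a A"
  then obtain p where p: "u p \<noteq> a p"
    by auto
  obtain N where N: "\<forall>v. agree N u v \<longrightarrow> v \<in> - A"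
    using assms \<open>u \<in> - insert a A\<close> unfolding baire_open_def by blast
  have "v \<in> - insert a A" if "agree (max N (Suc p)) u v" for v
  proof -
    have "agree N u v" "v p = u p"
      using that unfolding agree_def by auto
    then show ?thesis
      using N p by auto
  qed
  then show "\<exists>N. \<forall>v. agree N u v \<longrightarrow> v \<in> - insert a A"
    by blast
qed

theorem mainTheorem1:
  shows "\<exists>F. F \<subseteq> Ops \<and> closedO F \<and> (\<forall>p\<in>F. fst p = 1) \<and> \<not> borelO (term_clone F)"
proof (intro exI conjI)
  let ?F = "unary_op ` generators"
  show "?F \<subseteq> Ops"
    using unary_op_Ops by blast
  show "closedO ?F"
    unfolding generators_def
    using closedO_unary_op_image baire_open_compl_insert baire_open_compl_codes by blast
  show "\<forall>p\<in>?F. fst p = 1"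
    by (simp add: unary_op_def)
  show "\<not> borelO (term_clone ?F)"
  proof
    assume "borelO (term_clone ?F)"
    then have "analytic (- (unary_op \<circ> point_code) -` term_clone ?F)"
      unfolding borelO_def
      using analytic_vimage_borel baire_open_vimage_unary_op agree_point_code unary_op_Ops
      by (metis comp_apply)
    moreover have "(unary_op \<circ> point_code) -` term_clone ?F = Domain diag_pairs"
      by (rule set_eqI) (simp add: point_code_mem_term_clone_iff)
    ultimately show False
      using not_analytic_compl_diag_pairs by simp
  qed
qed

end
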